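(* Fix $1\le r\le n$. Let $A\in ARI$ be a polynomial-valued mould concentrated in depth $r$, with $A^r$ homogeneous of degree $n-r$, such that $A$ is alternal, push-invariant, and $swap(A)$ is circ-neutral. Let $B=swap(A)$ and assume that $B(v_1,\dots,v_r)=(-1)^{r-1}B(v_r,\dots,v_1)$. Then if $n-r$ is odd, $A=0$.
   Context: $ARI$ is the space of moulds $A=(A^r)_{r\ge0}$ with $A^r\in\mathbb{Q}(u_1,\dots,u_r)$, $A^0=0$. $swap(A)(v_1,\dots,v_r)=A(v_r,v_{r-1}-v_r,\dots,v_1-v_2)$. $A$ is alternal if for every $r\ge2$ and $1\le i\le[r/2]$ the sum of $A^r$ over all shuffles of $(u_1,\dots,u_i)$ with $(u_{i+1},\dots,u_r)$ vanishes. $A$ is push-invariant if $A(u_0,u_1,\dots,u_{r-1})=A(u_1,\dots,u_r)$ with $u_0=-u_1-\dots-u_r$. A mould $B$ in variables $v_i$ is circ-neutral if $\sum_{i=0}^{r-1}B(v_{i+1},\dots,v_r,v_1,\dots,v_i)=0$ for $r>1$. *)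

theory Defs
  imports Complex_Main
begin

text \<open>A mould is represented as \<open>A :: nat \<Rightarrow> rat list \<Rightarrow> rat\<close>: \<open>A s\<close> is the depth-s
  component, evaluated on lists of length s (values on other lists are irrelevant).
  Since the moulds in question are polynomial-valued and Q is infinite, polynomial
  identities are equivalent to identities of the associated functions.\<close>

definition hom_poly_fun :: "nat \<Rightarrow> nat \<Rightarrow> (rat list \<Rightarrow> rat) \<Rightarrow> bool" where
  "hom_poly_fun r d f \<longleftrightarrow>
     (\<exists>c :: nat list \<Rightarrow> rat. \<forall>us. length us = r \<longrightarrow>
        f us = (\<Sum>\<alpha>\<in>{\<alpha>. length \<alpha> = r \<and> sum_list \<alpha> = d}.
                   c \<alpha> * (\<Prod>i<r. (us ! i) ^ (\<alpha> ! i))))"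

text \<open>swap(A)(v_1,...,v_r) = A(v_r, v_{r-1}-v_r, ..., v_1-v_2) (0-indexed lists).\<close>
definition swap_args :: "rat list \<Rightarrow> rat list" where
  "swap_args vs = (let r = length vs in
     map (\<lambda>k. if k = 0 then vs ! (r - 1) else vs ! (r - 1 - k) - vs ! (r - k)) [0..<r])"

definition swap :: "(nat \<Rightarrow> rat list \<Rightarrow> rat) \<Rightarrow> nat \<Rightarrow> rat list \<Rightarrow> rat" where
  "swap A s vs = A s (swap_args vs)"

text \<open>Alternality: shuffles of the index words [0..<i] and [i..<s] (all letters distinct,
  so the set of shuffles coincides with the multiset of shuffles).\<close>
definition alternal :: "(nat \<Rightarrow> rat list \<Rightarrow> rat) \<Rightarrow> bool" where
  "alternal A \<longleftrightarrow> (\<forall>s us. length us = s \<and> s \<ge> 2 \<longrightarrow>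
      (\<forall>i. 1 \<le> i \<and> i \<le> s div 2 \<longrightarrow>
         (\<Sum>w\<in>shuffles [0..<i] [i..<s]. A s (map (\<lambda>j. us ! j) w)) = 0))"

definition push_invariant :: "(nat \<Rightarrow> rat list \<Rightarrow> rat) \<Rightarrow> bool" where
  "push_invariant A \<longleftrightarrow> (\<forall>s us. length us = s \<and> s \<ge> 1 \<longrightarrow>
      A s ((- sum_list us) # butlast us) = A s us)"

definition circ_neutral :: "(nat \<Rightarrow> rat list \<Rightarrow> rat) \<Rightarrow> bool" where
  "circ_neutral B \<longleftrightarrow> (\<forall>s vs. length vs = s \<and> s > 1 \<longrightarrow>
      (\<Sum>i<s. B s (rotate i vs)) = 0)"

end

theory Submission
  imports Defs
begin

text \<open>Alternality forces \<open>A(u_r,\<dots>,u_1) = (-1)^(r-1) A(u_1,\<dots>,u_r)\<close>. In the other direction,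
  the symmetry of \<open>B = swap(A)\<close> evaluated at the reversed partial sums of \<open>u\<close> relates \<open>A(u)\<close> to
  \<open>A\<close> at a point that push-invariance turns into \<open>-(u_r,\<dots>,u_1)\<close>. Odd homogeneity turns that into
  \<open>-A(u_r,\<dots>,u_1)\<close>, so \<open>A(u) = -A(u)\<close>.\<close>

fun shuffle_sum :: "('a list \<Rightarrow> 'b::comm_monoid_add) \<Rightarrow> 'a list \<Rightarrow> 'a list \<Rightarrow> 'b" where
  "shuffle_sum g [] ys = g ys"
| "shuffle_sum g xs [] = g xs"
| "shuffle_sum g (x # xs) (y # ys) =
     shuffle_sum (\<lambda>w. g (x # w)) xs (y # ys) + shuffle_sum (\<lambda>w. g (y # w)) (x # xs) ys"

lemma shuffle_sum_Nil2 [simp]: "shuffle_sum g xs [] = g xs"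
  by (cases xs) auto

lemma shuffle_sum_commute: "shuffle_sum g xs ys = shuffle_sum g ys xs"
  by (induction g xs ys rule: shuffle_sum.induct) (auto simp: add.commute)

lemma shuffle_sum_map:
  "shuffle_sum g (map h xs) (map h ys) = shuffle_sum (\<lambda>w. g (map h w)) xs ys"
  by (induction "\<lambda>w. g (map h w)" xs ys arbitrary: g rule: shuffle_sum.induct) auto

lemma sum_shuffles_eq_shuffle_sum:
  "distinct (xs @ ys) \<Longrightarrow> (\<Sum>w\<in>shuffles xs ys. g w) = shuffle_sum g xs ys"
proof (induction xs ys arbitrary: g rule: shuffles.induct)
  case (3 x xs y ys)
  have "(#) x ` shuffles xs (y # ys) \<inter> (#) y ` shuffles (x # xs) ys = {}"
    using "3.prems" by auto
  then have "(\<Sum>w\<in>shuffles (x # xs) (y # ys). g w) =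
      (\<Sum>w\<in>shuffles xs (y # ys). g (x # w)) + (\<Sum>w\<in>shuffles (x # xs) ys. g (y # w))"
    by (simp add: sum.union_disjoint sum.reindex)
  also have "\<dots> = shuffle_sum g (x # xs) (y # ys)"
    using "3.IH" "3.prems" by auto
  finally show ?case .
qed auto

text \<open>Peeling the letters of \<open>a\<close> one at a time: \<open>R j\<close> sums over the shuffles of the reversed
  prefix \<open>a\<^sub>j\<^sub>-\<^sub>1 \<dots> a\<^sub>0\<close> with the suffix after \<open>a\<^sub>j\<close>, all preceded by \<open>a\<^sub>j\<close>.
  Consecutive terms add up to a proper shuffle sum, so \<open>R\<close> alternates from \<open>R 0 = g a\<close>
  to \<open>R (length a - 1) = g (rev a)\<close>.\<close>

lemma shuffle_sum_rev_take_drop_Suc: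
  assumes "Suc j < length a"
  shows "shuffle_sum g (rev (take (Suc j) a)) (drop (Suc j) a) =
      shuffle_sum (\<lambda>w. g (a ! j # w)) (rev (take j a)) (drop (Suc j) a) +
      shuffle_sum (\<lambda>w. g (a ! Suc j # w)) (rev (take (Suc j) a)) (drop (Suc (Suc j)) a)"
proof -
  have "rev (take (Suc j) a) = a ! j # rev (take j a)"
    using assms by (simp add: take_Suc_conv_app_nth)
  moreover have "drop (Suc j) a = a ! Suc j # drop (Suc (Suc j)) a"
    using assms by (simp add: Cons_nth_drop_Suc)
  ultimately show ?thesis
    by (metis shuffle_sum.simps(3))
qed

lemma rev_eq_sign_if_shuffle_sums_vanish:
  fixes g :: "'a list \<Rightarrow> 'b::comm_ring_1"
  assumes vanish: "\<And>xs ys. xs \<noteq> [] \<Longrightarrow> ys \<noteq> [] \<Longrightarrow> length xs + length ys = length a \<Longrightarrow>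
      shuffle_sum g xs ys = 0"
    and "a \<noteq> []"
  shows "g (rev a) = (-1) ^ (length a - 1) * g a"
proof -
  define R where "R j = shuffle_sum (\<lambda>w. g (a ! j # w)) (rev (take j a)) (drop (Suc j) a)" for j
  have R_alternates: "R j = (-1) ^ j * g a" if "j < length a" for j
    using that
  proof (induction j)
    case 0
    then show ?case by (simp add: R_def Cons_nth_drop_Suc)
  next
    case (Suc j)
    have "R j + R (Suc j) = shuffle_sum g (rev (take (Suc j) a)) (drop (Suc j) a)"
      unfolding R_def using Suc.prems by (rule shuffle_sum_rev_take_drop_Suc [symmetric])
    also have "\<dots> = 0"
      using Suc.prems by (intro vanish) auto
    finally show ?case
      using Suc by (simp add: eq_neg_iff_add_eq_0 [symmetric])
  qed
  have "R (length a - 1) = g (last a # rev (butlast a))"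
    using \<open>a \<noteq> []\<close> by (simp add: R_def last_conv_nth butlast_conv_take)
  also have "last a # rev (butlast a) = rev a"
    using \<open>a \<noteq> []\<close> by (metis append_butlast_last_id rev.simps(2) rev_rev_ident)
  finally show ?thesis
    using R_alternates [of "length a - 1"] \<open>a \<noteq> []\<close> by simp
qed

lemma alternal_rev:
  assumes "alternal A" and "length u = r" and "r \<ge> 1"
  shows "A r (rev u) = (-1) ^ (r - 1) * A r u"
proof (cases "r = 1")
  case True
  then obtain x where "u = [x]"
    using \<open>length u = r\<close> by (cases u) auto
  then show ?thesis
    using True by simp
next
  case False
  have short_first: "shuffle_sum (A r) xs ys = 0"
    if "xs \<noteq> []" "length xs + length ys = r" "length xs \<le> r div 2" for xs ys
  proof -
    define i where "i = length xs"
    let ?at = "\<lambda>j. (xs @ ys) ! j"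
    have "map ?at [0..<i] = xs" "map ?at [i..<r] = ys"
      using that by (auto intro!: nth_equalityI simp: i_def nth_append)
    moreover have "(\<Sum>w\<in>shuffles [0..<i] [i..<r]. A r (map ?at w)) = 0"
      using alternal_def [THEN iffD1, rule_format, OF \<open>alternal A\<close>, where s = r and us = "xs @ ys" and i = i]
        False \<open>r \<ge> 1\<close> that
      by (simp add: i_def Suc_le_eq)
    ultimately show ?thesis
      by (simp add: sum_shuffles_eq_shuffle_sum shuffle_sum_map [symmetric])
  qed
  have "A r (rev u) = (-1) ^ (length u - 1) * A r u"
  proof (rule rev_eq_sign_if_shuffle_sums_vanish)
    fix xs ys :: "rat list"
    assume "xs \<noteq> []" "ys \<noteq> []" "length xs + length ys = length u"
    then show "shuffle_sum (A r) xs ys = 0"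
      using short_first [of xs ys] short_first [of ys xs] \<open>length u = r\<close>
      by (cases "length xs \<le> r div 2") (auto simp: shuffle_sum_commute)
  qed (use \<open>length u = r\<close> \<open>r \<ge> 1\<close> in auto)
  then show ?thesis
    using \<open>length u = r\<close> by simp
qed

lemma hom_poly_fun_map_uminus:
  assumes "hom_poly_fun r d f" and "length us = r"
  shows "f (map uminus us) = (-1) ^ d * f us"
proof -
  obtain c where c: "\<And>us. length us = r \<Longrightarrow>
      f us = (\<Sum>\<alpha>\<in>{\<alpha>. length \<alpha> = r \<and> sum_list \<alpha> = d}. c \<alpha> * (\<Prod>i<r. (us ! i) ^ (\<alpha> ! i)))"
    using assms(1) unfolding hom_poly_fun_def by blast
  have monomial: "(\<Prod>i<r. (- us ! i) ^ (\<alpha> ! i)) = (-1) ^ d * (\<Prod>i<r. (us ! i) ^ (\<alpha> ! i))"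
    if "length \<alpha> = r" "sum_list \<alpha> = d" for \<alpha>
  proof -
    have "(\<Prod>i<r. (- us ! i) ^ (\<alpha> ! i)) = (\<Prod>i<r. (-1) ^ (\<alpha> ! i) * (us ! i) ^ (\<alpha> ! i))"
      by (simp add: power_minus [of "us ! _"])
    also have "\<dots> = (-1) ^ (\<Sum>i<r. \<alpha> ! i) * (\<Prod>i<r. (us ! i) ^ (\<alpha> ! i))"
      by (simp only: prod.distrib power_sum)
    finally show ?thesis
      using that by (simp add: sum_list_sum_nth lessThan_atLeast0)
  qed
  have "f (map uminus us) =
      (\<Sum>\<alpha>\<in>{\<alpha>. length \<alpha> = r \<and> sum_list \<alpha> = d}. c \<alpha> * ((-1) ^ d * (\<Prod>i<r. (us ! i) ^ (\<alpha> ! i))))"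
    using assms(2) by (auto simp: c monomial intro!: sum.cong)
  then show ?thesis
    using assms(2) by (simp add: c sum_distrib_left mult.left_commute)
qed

definition partial_sums :: "rat list \<Rightarrow> rat list" where
  "partial_sums u = map (\<lambda>k. sum_list (take (Suc k) u)) [0..<length u]"

lemma length_swap_args [simp]: "length (swap_args vs) = length vs"
  by (simp add: swap_args_def Let_def)

lemma length_partial_sums [simp]: "length (partial_sums u) = length u"
  by (simp add: partial_sums_def)

lemma nth_partial_sums: "k < length u \<Longrightarrow> partial_sums u ! k = sum_list (take (Suc k) u)"
  by (simp add: partial_sums_def)

lemma swap_args_rev_partial_sums: "swap_args (rev (partial_sums u)) = u"
proof (rule nth_equalityI)
  fix k assume "k < length (swap_args (rev (partial_sums u)))"
  then have "k < length u" by simp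
  then show "swap_args (rev (partial_sums u)) ! k = u ! k"
    by (cases k) (auto simp: swap_args_def Let_def rev_nth nth_partial_sums take_Suc_conv_app_nth)
qed simp

lemma swap_args_partial_sums:
  assumes "u \<noteq> []"
  shows "swap_args (partial_sums u) = (- sum_list (map uminus (rev u))) # butlast (map uminus (rev u))"
proof (rule nth_equalityI)
  fix k assume "k < length (swap_args (partial_sums u))"
  then have k: "k < length u" by simp
  show "swap_args (partial_sums u) ! k = ((- sum_list (map uminus (rev u))) # butlast (map uminus (rev u))) ! k"
  proof (cases k)
    case 0
    then show ?thesis
      using assms by (simp add: swap_args_def Let_def nth_partial_sums sum_list_rev uminus_sum_list_map)
  next
    case (Suc j)
    then have "Suc (length u - Suc k) = length u - k" "length u - k < length u"
      using k by auto
    then show ?thesis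
      using k Suc by (simp add: swap_args_def Let_def nth_partial_sums take_Suc_conv_app_nth nth_butlast rev_nth)
  qed
qed (use assms in simp)

theorem lemma15:
  fixes r n :: nat and A :: "nat \<Rightarrow> rat list \<Rightarrow> rat"
  assumes "1 \<le> r" and "r \<le> n"
    and conc: "\<forall>s us. s \<noteq> r \<and> length us = s \<longrightarrow> A s us = 0"
    and hom: "hom_poly_fun r (n - r) (A r)"
    and "alternal A"
    and "push_invariant A"
    and "circ_neutral (swap A)"
    and sym: "\<forall>vs. length vs = r \<longrightarrow> swap A r vs = (-1) ^ (r - 1) * swap A r (rev vs)"
    and "odd (n - r)"
  shows "\<forall>s us. length us = s \<longrightarrow> A s us = 0"
proof (intro allI impI)
  fix s and u :: "rat list"
  assume "length u = s"
  show "A s u = 0"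
  proof (cases "s = r")
    case False
    then show ?thesis using conc \<open>length u = s\<close> by blast
  next
    case True
    let ?\<epsilon> = "(-1) ^ (r - 1) :: rat" and ?w = "map uminus (rev u)"
    have "u \<noteq> []" "length ?w = r"
      using \<open>length u = s\<close> True \<open>1 \<le> r\<close> by auto
    have "A r u = ?\<epsilon> * A r (swap_args (partial_sums u))"
      using sym \<open>length u = s\<close> True by (simp add: swap_def swap_args_rev_partial_sums)
    also have "A r (swap_args (partial_sums u)) = A r ?w"
      using \<open>push_invariant A\<close> \<open>length ?w = r\<close> \<open>1 \<le> r\<close>
      unfolding swap_args_partial_sums [OF \<open>u \<noteq> []\<close>] push_invariant_def by blast
    also have "A r ?w = - A r (rev u)"
      using hom_poly_fun_map_uminus [OF hom] \<open>length u = s\<close> True \<open>odd (n - r)\<close> by simp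
    also have "A r (rev u) = ?\<epsilon> * A r u"
      using alternal_rev [OF \<open>alternal A\<close>] \<open>length u = s\<close> True \<open>1 \<le> r\<close> by blast
    finally have "A r u = - A r u"
      by (simp flip: power_add)
    then show ?thesis
      using True by simp
  qed
qed

end
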